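(* Let $k,l\ge1$ with $k\ne l$ and $1\le r\le(2k+1)(2l+1)$. Let $\overline{\mathcal{B}}(2k+1,2l+1;r)$ be the subset of $\mathcal{B}(2k+1,2l+1;r)$ consisting of boards whose board partition $\begin{pmatrix}\lambda_1&\lambda_2&\lambda_3&\lambda_4\\ \delta_1&\delta_2&\delta_3&\delta_4\end{pmatrix}_c$ satisfies: (i) $\lambda_1\ge\lambda_i$ for all $i>1$; (ii) if $\lambda_1=\lambda_3$ then $\lambda_2\ge\lambda_4$; if in addition $\lambda_2=\lambda_4$ then $\delta_1\ge\delta_3$; and if further $\delta_1=\delta_3$ then $\delta_2\ge\delta_4$; (iii) if $\lambda_1=\lambda_2$ then $\lambda_3\ge\lambda_4$; if in addition $\lambda_3=\lambda_4$ then $\delta_2\ge\delta_4$; (iv) if $\lambda_1=\lambda_4$ then $\lambda_2\ge\lambda_3$; if in addition $\lambda_2=\lambda_3$ then $\delta_1\ge\delta_3$. Then: (1) $\overline{\mathcal{B}}(2k+1,2l+1;r)$ is a disjoint union of sets each consisting of all boards in $\mathcal{B}(2k+1,2l+1;r)$ with some fixed board partition; (2) every board of $\mathcal{B}(2k+1,2l+1;r)$ is equivalent under $\langle H,V\rangle$ to some board of $\overline{\mathcal{B}}(2k+1,2l+1;r)$; (3) if two boards of $\overline{\mathcal{B}}(2k+1,2l+1;r)$ are equivalent under $\langle H,V\rangle$, they have the same board partition.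
   Context: A $(2k+1)\times(2l+1)$ grid ($2k+1$ rows numbered top to bottom, $2l+1$ columns numbered left to right); $\mathcal{B}(2k+1,2l+1;r)$ is the set of boards, i.e. subsets of exactly $r$ blocked cells. The symmetry group is $\langle H,V\rangle=\{R_0,H,V,R_{180}\}$ ($H$: reflection across the horizontal midline; $V$: across the vertical midline; $R_{180}$: 180-degree rotation); boards are equivalent if some element maps one to the other. The grid is divided into nine regions: $\Lambda_1$ = rows $1..k$, cols $1..l$; $\Lambda_2$ = rows $1..k$, cols $l+2..2l+1$; $\Lambda_3$ = rows $k+2..2k+1$, cols $l+2..2l+1$; $\Lambda_4$ = rows $k+2..2k+1$, cols $1..l$; $\Delta_1$ = rows $1..k$, col $l+1$; $\Delta_2$ = row $k+1$, cols $l+2..2l+1$; $\Delta_3$ = rows $k+2..2k+1$, col $l+1$; $\Delta_4$ = row $k+1$, cols $1..l$; and the center cell $(k+1,l+1)$. The board partition $\begin{pmatrix}\lambda_1&\lambda_2&\lambda_3&\lambda_4\\ \delta_1&\delta_2&\delta_3&\delta_4\end{pmatrix}_c$ records the numbers of blocked cells $\lambda_i$ in $\Lambda_i$, $\delta_i$ in $\Delta_i$, and $c\in\{0,1\}$ at the center. *)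

theory Defs
  imports Main "HOL-Library.Disjoint_Sets"
begin

type_synonym cell = "nat \<times> nat"   (* (row, column), 1-based *)

definition grid :: "nat \<Rightarrow> nat \<Rightarrow> cell set" where
  "grid k l = {1..2*k+1} \<times> {1..2*l+1}"

definition boards :: "nat \<Rightarrow> nat \<Rightarrow> nat \<Rightarrow> cell set set" where
  "boards k l r = {B. B \<subseteq> grid k l \<and> card B = r}"

definition reflH :: "nat \<Rightarrow> nat \<Rightarrow> cell \<Rightarrow> cell" where
  "reflH k l = (\<lambda>(i,j). (2*k+2-i, j))"
definition reflV :: "nat \<Rightarrow> nat \<Rightarrow> cell \<Rightarrow> cell" where
  "reflV k l = (\<lambda>(i,j). (i, 2*l+2-j))"
definition rot180 :: "nat \<Rightarrow> nat \<Rightarrow> cell \<Rightarrow> cell" where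
  "rot180 k l = (\<lambda>(i,j). (2*k+2-i, 2*l+2-j))"

definition symHV :: "nat \<Rightarrow> nat \<Rightarrow> (cell \<Rightarrow> cell) set" where
  "symHV k l = {id, reflH k l, reflV k l, rot180 k l}"

definition equivHV :: "nat \<Rightarrow> nat \<Rightarrow> cell set \<Rightarrow> cell set \<Rightarrow> bool" where
  "equivHV k l B B' \<longleftrightarrow> (\<exists>g \<in> symHV k l. g ` B = B')"

definition Lam1 :: "nat \<Rightarrow> nat \<Rightarrow> cell set" where "Lam1 k l = {1..k} \<times> {1..l}"
definition Lam2 :: "nat \<Rightarrow> nat \<Rightarrow> cell set" where "Lam2 k l = {1..k} \<times> {l+2..2*l+1}"
definition Lam3 :: "nat \<Rightarrow> nat \<Rightarrow> cell set" where "Lam3 k l = {k+2..2*k+1} \<times> {l+2..2*l+1}"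
definition Lam4 :: "nat \<Rightarrow> nat \<Rightarrow> cell set" where "Lam4 k l = {k+2..2*k+1} \<times> {1..l}"
definition Del1 :: "nat \<Rightarrow> nat \<Rightarrow> cell set" where "Del1 k l = {1..k} \<times> {l+1}"
definition Del2 :: "nat \<Rightarrow> nat \<Rightarrow> cell set" where "Del2 k l = {k+1} \<times> {l+2..2*l+1}"
definition Del3 :: "nat \<Rightarrow> nat \<Rightarrow> cell set" where "Del3 k l = {k+2..2*k+1} \<times> {l+1}"
definition Del4 :: "nat \<Rightarrow> nat \<Rightarrow> cell set" where "Del4 k l = {k+1} \<times> {1..l}"
definition Cen :: "nat \<Rightarrow> nat \<Rightarrow> cell set" where "Cen k l = {(k+1, l+1)}"

definition board_partition ::
  "nat \<Rightarrow> nat \<Rightarrow> cell set \<Rightarrow> (nat \<times> nat \<times> nat \<times> nat) \<times> (nat \<times> nat \<times> nat \<times> nat) \<times> nat" where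
  "board_partition k l B =
     ((card (B \<inter> Lam1 k l), card (B \<inter> Lam2 k l), card (B \<inter> Lam3 k l), card (B \<inter> Lam4 k l)),
      (card (B \<inter> Del1 k l), card (B \<inter> Del2 k l), card (B \<inter> Del3 k l), card (B \<inter> Del4 k l)),
      card (B \<inter> Cen k l))"

definition canonical_partition ::
  "(nat \<times> nat \<times> nat \<times> nat) \<times> (nat \<times> nat \<times> nat \<times> nat) \<times> nat \<Rightarrow> bool" where
  "canonical_partition P = (case P of ((l1,l2,l3,l4),(d1,d2,d3,d4),c) \<Rightarrow>
     (l1 \<ge> l2 \<and> l1 \<ge> l3 \<and> l1 \<ge> l4) \<and>
     (l1 = l3 \<longrightarrow> l2 \<ge> l4 \<and> (l2 = l4 \<longrightarrow> d1 \<ge> d3 \<and> (d1 = d3 \<longrightarrow> d2 \<ge> d4))) \<and>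
     (l1 = l2 \<longrightarrow> l3 \<ge> l4 \<and> (l3 = l4 \<longrightarrow> d2 \<ge> d4)) \<and>
     (l1 = l4 \<longrightarrow> l2 \<ge> l3 \<and> (l2 = l3 \<longrightarrow> d1 \<ge> d3)))"

definition boards_bar :: "nat \<Rightarrow> nat \<Rightarrow> nat \<Rightarrow> cell set set" where
  "boards_bar k l r = {B \<in> boards k l r. canonical_partition (board_partition k l B)}"

definition partition_class ::
  "nat \<Rightarrow> nat \<Rightarrow> nat \<Rightarrow> (nat \<times> nat \<times> nat \<times> nat) \<times> (nat \<times> nat \<times> nat \<times> nat) \<times> nat \<Rightarrow> cell set set" where
  "partition_class k l r P = {B \<in> boards k l r. board_partition k l B = P}"

end

theory Submission
  imports Defs "HOL-Library.Product_Lexorder"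
begin

(* Each symmetry in \<langle>H,V\<rangle> maps every region of the grid onto a region, so it acts on board
   partitions by permuting the eight region counts, the centre count staying fixed.
   Conditions (i)-(iv) say exactly that the key (\<lambda>1, \<lambda>2, \<lambda>3, \<delta>1, \<delta>2) of a partition is
   lexicographically maximal in its orbit under this action. The key attains a maximum on
   each (four-element) orbit and is injective on it, so every orbit contains exactly one
   partition satisfying (i)-(iv). Since moving a board moves its partition within its
   orbit, this gives (2) and (3); (1) is just grouping boards by their partition. *)

type_synonym partition = "(nat \<times> nat \<times> nat \<times> nat) \<times> (nat \<times> nat \<times> nat \<times> nat) \<times> nat"

lemma symHV_inj_on_grid: "g \<in> symHV k l \<Longrightarrow> inj_on g (grid k l)"
  by (auto simp: symHV_def inj_on_def grid_def reflH_def reflV_def rot180_def)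

lemma symHV_maps_grid: "g \<in> symHV k l \<Longrightarrow> g ` grid k l \<subseteq> grid k l"
  by (auto simp: symHV_def grid_def reflH_def reflV_def rot180_def)

lemma boards_image_symHV:
  assumes "B \<in> boards k l r" "g \<in> symHV k l"
  shows "g ` B \<in> boards k l r"
proof -
  have B: "B \<subseteq> grid k l" "card B = r" using assms(1) by (simp_all add: boards_def)
  have "inj_on g B" using symHV_inj_on_grid[OF assms(2)] B(1) by (rule inj_on_subset)
  then show ?thesis using B symHV_maps_grid[OF assms(2)] by (auto simp: boards_def card_image)
qed

lemma card_image_Int_eq_card_Int_vimage:
  assumes "inj_on g X" "B \<subseteq> X"
  shows "card (g ` B \<inter> R) = card (B \<inter> (X \<inter> g -` R))"
proof -
  have "g ` B \<inter> R = g ` (B \<inter> (X \<inter> g -` R))" using assms(2) by auto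
  moreover have "inj_on g (B \<inter> (X \<inter> g -` R))" using assms by (auto intro: inj_on_subset)
  ultimately show ?thesis by (simp add: card_image)
qed

lemmas region_defs =
  Lam1_def Lam2_def Lam3_def Lam4_def Del1_def Del2_def Del3_def Del4_def Cen_def

lemma grid_Int_vimage_reflH:
  "grid k l \<inter> reflH k l -` Lam1 k l = Lam4 k l" "grid k l \<inter> reflH k l -` Lam2 k l = Lam3 k l"
  "grid k l \<inter> reflH k l -` Lam3 k l = Lam2 k l" "grid k l \<inter> reflH k l -` Lam4 k l = Lam1 k l"
  "grid k l \<inter> reflH k l -` Del1 k l = Del3 k l" "grid k l \<inter> reflH k l -` Del2 k l = Del2 k l"
  "grid k l \<inter> reflH k l -` Del3 k l = Del1 k l" "grid k l \<inter> reflH k l -` Del4 k l = Del4 k l"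
  "grid k l \<inter> reflH k l -` Cen k l = Cen k l"
  by (auto simp: reflH_def grid_def region_defs)

lemma grid_Int_vimage_reflV:
  "grid k l \<inter> reflV k l -` Lam1 k l = Lam2 k l" "grid k l \<inter> reflV k l -` Lam2 k l = Lam1 k l"
  "grid k l \<inter> reflV k l -` Lam3 k l = Lam4 k l" "grid k l \<inter> reflV k l -` Lam4 k l = Lam3 k l"
  "grid k l \<inter> reflV k l -` Del1 k l = Del1 k l" "grid k l \<inter> reflV k l -` Del2 k l = Del4 k l"
  "grid k l \<inter> reflV k l -` Del3 k l = Del3 k l" "grid k l \<inter> reflV k l -` Del4 k l = Del2 k l"
  "grid k l \<inter> reflV k l -` Cen k l = Cen k l"
  by (auto simp: reflV_def grid_def region_defs)

lemma grid_Int_vimage_rot180: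
  "grid k l \<inter> rot180 k l -` Lam1 k l = Lam3 k l" "grid k l \<inter> rot180 k l -` Lam2 k l = Lam4 k l"
  "grid k l \<inter> rot180 k l -` Lam3 k l = Lam1 k l" "grid k l \<inter> rot180 k l -` Lam4 k l = Lam2 k l"
  "grid k l \<inter> rot180 k l -` Del1 k l = Del3 k l" "grid k l \<inter> rot180 k l -` Del2 k l = Del4 k l"
  "grid k l \<inter> rot180 k l -` Del3 k l = Del1 k l" "grid k l \<inter> rot180 k l -` Del4 k l = Del2 k l"
  "grid k l \<inter> rot180 k l -` Cen k l = Cen k l"
  by (auto simp: rot180_def grid_def region_defs)

definition partition_reflH :: "partition \<Rightarrow> partition" where
  "partition_reflH = (\<lambda>((l1,l2,l3,l4),(d1,d2,d3,d4),c). ((l4,l3,l2,l1),(d3,d2,d1,d4),c))"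

definition partition_reflV :: "partition \<Rightarrow> partition" where
  "partition_reflV = (\<lambda>((l1,l2,l3,l4),(d1,d2,d3,d4),c). ((l2,l1,l4,l3),(d1,d4,d3,d2),c))"

definition partition_rot180 :: "partition \<Rightarrow> partition" where
  "partition_rot180 = (\<lambda>((l1,l2,l3,l4),(d1,d2,d3,d4),c). ((l3,l4,l1,l2),(d3,d4,d1,d2),c))"

definition partition_orbit :: "partition \<Rightarrow> partition set" where
  "partition_orbit P = {P, partition_reflH P, partition_reflV P, partition_rot180 P}"

definition partition_key :: "partition \<Rightarrow> nat \<times> nat \<times> nat \<times> nat \<times> nat" where
  "partition_key = (\<lambda>((l1,l2,l3,l4),(d1,d2,d3,d4),c). (l1,l2,l3,d1,d2))"

lemmas partition_action_defs =
  partition_orbit_def partition_reflH_def partition_reflV_def partition_rot180_def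

lemma board_partition_reflH:
  assumes "B \<subseteq> grid k l"
  shows "board_partition k l (reflH k l ` B) = partition_reflH (board_partition k l B)"
proof -
  have "card (reflH k l ` B \<inter> R) = card (B \<inter> (grid k l \<inter> reflH k l -` R))" for R
    by (rule card_image_Int_eq_card_Int_vimage[OF symHV_inj_on_grid assms]) (simp add: symHV_def)
  then show ?thesis by (simp add: board_partition_def partition_reflH_def grid_Int_vimage_reflH)
qed

lemma board_partition_reflV:
  assumes "B \<subseteq> grid k l"
  shows "board_partition k l (reflV k l ` B) = partition_reflV (board_partition k l B)"
proof -
  have "card (reflV k l ` B \<inter> R) = card (B \<inter> (grid k l \<inter> reflV k l -` R))" for R
    by (rule card_image_Int_eq_card_Int_vimage[OF symHV_inj_on_grid assms]) (simp add: symHV_def)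
  then show ?thesis by (simp add: board_partition_def partition_reflV_def grid_Int_vimage_reflV)
qed

lemma board_partition_rot180:
  assumes "B \<subseteq> grid k l"
  shows "board_partition k l (rot180 k l ` B) = partition_rot180 (board_partition k l B)"
proof -
  have "card (rot180 k l ` B \<inter> R) = card (B \<inter> (grid k l \<inter> rot180 k l -` R))" for R
    by (rule card_image_Int_eq_card_Int_vimage[OF symHV_inj_on_grid assms]) (simp add: symHV_def)
  then show ?thesis by (simp add: board_partition_def partition_rot180_def grid_Int_vimage_rot180)
qed

lemma board_partition_image_symHV:
  assumes "B \<subseteq> grid k l"
  shows "(\<lambda>g. board_partition k l (g ` B)) ` symHV k l = partition_orbit (board_partition k l B)"
  using assms
  by (simp add: symHV_def partition_orbit_def
      board_partition_reflH board_partition_reflV board_partition_rot180)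

lemma canonical_partition_iff_key_maximal:
  "canonical_partition P \<longleftrightarrow> (\<forall>Q \<in> partition_orbit P. partition_key Q \<le> partition_key P)"
  by (cases P) (auto simp: partition_action_defs partition_key_def canonical_partition_def)

lemma partition_orbit_self: "P \<in> partition_orbit P"
  by (simp add: partition_orbit_def)

lemma partition_orbit_eq: "Q \<in> partition_orbit P \<Longrightarrow> partition_orbit Q = partition_orbit P"
  by (cases P) (auto simp: partition_action_defs)

lemma partition_key_inj_on_orbit:
  "Q \<in> partition_orbit P \<Longrightarrow> partition_key Q = partition_key P \<Longrightarrow> Q = P"
  by (cases P) (auto simp: partition_action_defs partition_key_def)

lemma ex_canonical_partition_in_orbit: "\<exists>Q \<in> partition_orbit P. canonical_partition Q"
proof -
  let ?keys = "partition_key ` partition_orbit P"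
  have fin: "finite ?keys" "?keys \<noteq> {}" by (simp_all add: partition_orbit_def)
  then have "Max ?keys \<in> ?keys" by (rule Max_in)
  then obtain Q where Q: "Q \<in> partition_orbit P" "partition_key Q = Max ?keys" by auto
  have "partition_key R \<le> partition_key Q" if "R \<in> partition_orbit Q" for R
    using that partition_orbit_eq[OF Q(1)] Q(2) fin(1) by simp
  then show ?thesis using Q(1) canonical_partition_iff_key_maximal by blast
qed

lemma canonical_partition_unique_in_orbit:
  assumes "canonical_partition P" "canonical_partition Q" "Q \<in> partition_orbit P"
  shows "Q = P"
proof -
  have "P \<in> partition_orbit Q" using partition_orbit_eq[OF assms(3)] partition_orbit_self by blast
  then have "partition_key Q = partition_key P"
    using assms canonical_partition_iff_key_maximal by (meson order_antisym)
  then show ?thesis using assms(3) partition_key_inj_on_orbit by blast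
qed

lemma boards_bar_disjoint_Union_partition_class:
  "\<exists>\<P>. boards_bar k l r = \<Union> (partition_class k l r ` \<P>)
      \<and> disjoint_family_on (partition_class k l r) \<P>
      \<and> (\<forall>P\<in>\<P>. partition_class k l r P \<noteq> {})"
proof (intro exI conjI)
  let ?\<P> = "board_partition k l ` boards_bar k l r"
  show "boards_bar k l r = \<Union> (partition_class k l r ` ?\<P>)"
    by (auto simp: boards_bar_def partition_class_def)
  show "disjoint_family_on (partition_class k l r) ?\<P>"
    by (auto simp: disjoint_family_on_def partition_class_def)
  show "\<forall>P\<in>?\<P>. partition_class k l r P \<noteq> {}"
    by (auto simp: boards_bar_def partition_class_def)
qed

lemma ex_equivHV_boards_bar:
  assumes B: "B \<in> boards k l r"
  shows "\<exists>B' \<in> boards_bar k l r. equivHV k l B B'"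
proof -
  have "B \<subseteq> grid k l" using B by (simp add: boards_def)
  obtain Q where Q: "Q \<in> partition_orbit (board_partition k l B)" "canonical_partition Q"
    using ex_canonical_partition_in_orbit by blast
  then have "Q \<in> (\<lambda>g. board_partition k l (g ` B)) ` symHV k l"
    using board_partition_image_symHV[OF \<open>B \<subseteq> grid k l\<close>] by simp
  then obtain g where "g \<in> symHV k l" "board_partition k l (g ` B) = Q" by auto
  then show ?thesis
    using boards_image_symHV[OF B] Q(2) by (auto simp: boards_bar_def equivHV_def)
qed

lemma equivHV_boards_bar_same_partition:
  assumes "B \<in> boards_bar k l r" "B' \<in> boards_bar k l r" "equivHV k l B B'"
  shows "board_partition k l B = board_partition k l B'"
proof -
  obtain g where "g \<in> symHV k l" "B' = g ` B" using assms(3) by (auto simp: equivHV_def)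
  moreover have "B \<subseteq> grid k l" using assms(1) by (simp add: boards_bar_def boards_def)
  ultimately have "board_partition k l B' \<in> partition_orbit (board_partition k l B)"
    using board_partition_image_symHV by blast
  moreover have "canonical_partition (board_partition k l B)"
    and "canonical_partition (board_partition k l B')"
    using assms(1,2) by (simp_all add: boards_bar_def)
  ultimately show ?thesis by (rule canonical_partition_unique_in_orbit[symmetric, rotated 2])
qed

theorem theorem4p7:
  fixes k l r :: nat
  assumes "k \<ge> 1" and "l \<ge> 1" and "k \<noteq> l"
    and "1 \<le> r" and "r \<le> (2*k+1)*(2*l+1)"
  shows "(\<exists>\<P>. boards_bar k l r = \<Union> (partition_class k l r ` \<P>)
              \<and> disjoint_family_on (partition_class k l r) \<P>
              \<and> (\<forall>P\<in>\<P>. partition_class k l r P \<noteq> {}))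
       \<and> (\<forall>B \<in> boards k l r. \<exists>B' \<in> boards_bar k l r. equivHV k l B B')
       \<and> (\<forall>B \<in> boards_bar k l r. \<forall>B' \<in> boards_bar k l r.
            equivHV k l B B' \<longrightarrow> board_partition k l B = board_partition k l B')"
proof (intro conjI)
  show "\<forall>B \<in> boards k l r. \<exists>B' \<in> boards_bar k l r. equivHV k l B B'"
    by (rule ballI) (rule ex_equivHV_boards_bar)
  show "\<forall>B \<in> boards_bar k l r. \<forall>B' \<in> boards_bar k l r.
      equivHV k l B B' \<longrightarrow> board_partition k l B = board_partition k l B'"
    by (intro ballI impI) (rule equivHV_boards_bar_same_partition)
qed (rule boards_bar_disjoint_Union_partition_class)

end
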